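(* Every threshold tolerance graph is a pairwise compatibility graph.
   Context: All graphs are finite and simple. A graph $G=(V,E)$ is a threshold tolerance graph if there exist functions $g,t:V\to\mathbb{R}^+$ (positive reals) such that for all distinct $x,y\in V$, $\{x,y\}\in E$ if and only if $g(x)+g(y)\ge\min(t(x),t(y))$. A graph $G=(V,E)$ is a pairwise compatibility graph (PCG) if there exist a tree $T$ with non-negative real edge weights, whose set of leaves is exactly $V$, and two non-negative real numbers $d_{min}\le d_{max}$ such that for all distinct $u,v\in V$, $(u,v)\in E$ if and only if $d_{min}\le d_T(u,v)\le d_{max}$, where $d_T(u,v)$ is the sum of the weights of the edges on the unique path from $u$ to $v$ in $T$. *)

theory Defs
  imports Complex_Main
begin

definition simple_graph :: "'a set \<Rightarrow> 'a set set \<Rightarrow> bool" where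
  "simple_graph V E \<longleftrightarrow> finite V \<and>
     E \<subseteq> {{x, y} | x y. x \<in> V \<and> y \<in> V \<and> x \<noteq> y}"

definition threshold_tolerance_graph :: "'a set \<Rightarrow> 'a set set \<Rightarrow> bool" where
  "threshold_tolerance_graph V E \<longleftrightarrow> simple_graph V E \<and>
     (\<exists>g t :: 'a \<Rightarrow> real. (\<forall>x\<in>V. g x > 0 \<and> t x > 0) \<and>
        (\<forall>x\<in>V. \<forall>y\<in>V. x \<noteq> y \<longrightarrow>
           ({x, y} \<in> E \<longleftrightarrow> g x + g y \<ge> min (t x) (t y))))"

definition path_edges :: "'n list \<Rightarrow> 'n set list" where
  "path_edges p = map (\<lambda>(a, b). {a, b}) (zip p (tl p))"

definition is_walk :: "'n set set \<Rightarrow> 'n list \<Rightarrow> bool" where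
  "is_walk Ed p \<longleftrightarrow> p \<noteq> [] \<and> set (path_edges p) \<subseteq> Ed"

definition simple_path :: "'n set set \<Rightarrow> 'n \<Rightarrow> 'n \<Rightarrow> 'n list \<Rightarrow> bool" where
  "simple_path Ed x y p \<longleftrightarrow> is_walk Ed p \<and> distinct p \<and> hd p = x \<and> last p = y"

definition is_tree :: "'n set \<Rightarrow> 'n set set \<Rightarrow> bool" where
  "is_tree N Ed \<longleftrightarrow> N \<noteq> {} \<and> simple_graph N Ed \<and>
     (\<forall>x\<in>N. \<forall>y\<in>N. \<exists>p. simple_path Ed x y p) \<and>
     \<not> (\<exists>p. is_walk Ed p \<and> distinct p \<and> length p \<ge> 3 \<and> {last p, hd p} \<in> Ed)"

definition degree :: "'n set set \<Rightarrow> 'n \<Rightarrow> nat" where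
  "degree Ed v = card {e \<in> Ed. v \<in> e}"

text \<open>Leaves: nodes of degree at most 1 (degree 0 only occurs for the one-node tree).\<close>
definition leaves :: "'n set \<Rightarrow> 'n set set \<Rightarrow> 'n set" where
  "leaves N Ed = {v \<in> N. degree Ed v \<le> 1}"

definition tree_dist :: "'n set set \<Rightarrow> ('n set \<Rightarrow> real) \<Rightarrow> 'n \<Rightarrow> 'n \<Rightarrow> real" where
  "tree_dist Ed w x y = sum_list (map w (path_edges (THE p. simple_path Ed x y p)))"

text \<open>Pairwise compatibility graph. Tree nodes are taken in the type ('a + nat)
  (leaves are the vertices of V, embedded by Inl); every finite tree whose leaf set is V
  is isomorphic to such a tree.\<close>
definition pcg :: "'a set \<Rightarrow> 'a set set \<Rightarrow> bool" where
  "pcg V E \<longleftrightarrow> simple_graph V E \<and>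
     (\<exists>(N :: ('a + nat) set) Ed (w :: ('a + nat) set \<Rightarrow> real) dmin dmax.
        is_tree N Ed \<and> leaves N Ed = Inl ` V \<and> (\<forall>e\<in>Ed. w e \<ge> 0) \<and>
        0 \<le> dmin \<and> dmin \<le> dmax \<and>
        (\<forall>u\<in>V. \<forall>v\<in>V. u \<noteq> v \<longrightarrow>
           ({u, v} \<in> E \<longleftrightarrow>
              dmin \<le> tree_dist Ed w (Inl u) (Inl v) \<and> tree_dist Ed w (Inl u) (Inl v) \<le> dmax)))"

end

theory Submission
  imports Defs
begin

text \<open>Order the vertices by decreasing tolerance \<open>t\<close> and hang them, in this order, as the legs
  of a caterpillar. A leg \<open>x\<close> gets length \<open>C/2 + g x - t x/2\<close> with \<open>C = \<Sum>t\<close>, and the spine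
  edges are weighted so that the spine node carrying \<open>x\<close> sits at position \<open>t x/2\<close>. The distance
  of two leaves \<open>u, v\<close> is then \<open>C + g u + g v - min (t u) (t v)\<close>, so they are adjacent iff their
  distance is at least \<open>C\<close>, and no distance exceeds \<open>C + \<Sum>g\<close>.\<close>

lemma path_edges_Nil [simp]: "path_edges [] = []"
  by (simp add: path_edges_def)

lemma path_edges_singleton [simp]: "path_edges [a] = []"
  by (simp add: path_edges_def)

lemma path_edges_Cons_Cons [simp]: "path_edges (a # b # p) = {a, b} # path_edges (b # p)"
  by (simp add: path_edges_def)

lemma path_edges_Cons: "p \<noteq> [] \<Longrightarrow> path_edges (a # p) = {a, hd p} # path_edges p"
  by (cases p) auto

lemma path_edges_snoc: "xs \<noteq> [] \<Longrightarrow> path_edges (xs @ [a]) = path_edges xs @ [{last xs, a}]"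
  by (induction xs rule: induct_list012) (auto simp: path_edges_Cons)

lemma path_edges_rev: "path_edges (rev p) = rev (path_edges p)"
proof (induction p)
  case (Cons a p)
  show ?case
  proof (cases "p = []")
    case False
    then have "path_edges (rev (a # p)) = rev (path_edges p) @ [{hd p, a}]"
      using Cons.IH by (simp add: path_edges_snoc last_rev)
    then show ?thesis
      using False by (simp add: path_edges_Cons insert_commute)
  qed simp
qed simp

lemma is_walk_singleton [simp]: "is_walk Ed [a]"
  by (simp add: is_walk_def)

lemma is_walk_Cons_Cons [simp]: "is_walk Ed (a # b # p) \<longleftrightarrow> {a, b} \<in> Ed \<and> is_walk Ed (b # p)"
  by (auto simp: is_walk_def)

lemma is_walk_iff_nth:
  "is_walk Ed p \<longleftrightarrow> p \<noteq> [] \<and> (\<forall>i. Suc i < length p \<longrightarrow> {p ! i, p ! Suc i} \<in> Ed)"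
proof (induction p rule: induct_list012)
  case (3 x y zs)
  have "(\<forall>i. Suc i < length (x # y # zs) \<longrightarrow> {(x # y # zs) ! i, (x # y # zs) ! Suc i} \<in> Ed)
    \<longleftrightarrow> {x, y} \<in> Ed \<and> (\<forall>i. Suc i < length (y # zs) \<longrightarrow> {(y # zs) ! i, (y # zs) ! Suc i} \<in> Ed)"
    by (auto simp: All_less_Suc2 simp del: length_Cons)
  then show ?case
    using "3.IH"(2) by simp
qed (auto simp: is_walk_def)

lemma is_walk_nth_edge: "is_walk Ed p \<Longrightarrow> Suc i < length p \<Longrightarrow> {p ! i, p ! Suc i} \<in> Ed"
  by (simp add: is_walk_iff_nth)

lemma is_walk_mono: "is_walk Ed p \<Longrightarrow> Ed \<subseteq> Ed' \<Longrightarrow> is_walk Ed' p"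
  by (auto simp: is_walk_def)

lemma is_walk_rev [simp]: "is_walk Ed (rev p) \<longleftrightarrow> is_walk Ed p"
  by (simp add: is_walk_def path_edges_rev)

lemma simple_path_rev: "simple_path Ed a b p \<Longrightarrow> simple_path Ed b a (rev p)"
  by (auto simp: simple_path_def hd_rev last_rev)

lemma simple_path_same: "simple_path Ed a a p \<longleftrightarrow> p = [a]"
proof
  assume p: "simple_path Ed a a p"
  then have "p \<noteq> []" "distinct p" "hd p = last p"
    by (auto simp: simple_path_def is_walk_def)
  then show "p = [a]"
    using p by (cases p) (auto simp: simple_path_def split: if_splits)
qed (simp add: simple_path_def)

lemma simple_graph_edgeD: "simple_graph N Ed \<Longrightarrow> {a, b} \<in> Ed \<Longrightarrow> a \<in> N \<and> b \<in> N \<and> a \<noteq> b"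
  unfolding simple_graph_def by (auto simp: doubleton_eq_iff)

lemma simple_graph_finite_edges: "simple_graph N Ed \<Longrightarrow> finite Ed"
  unfolding simple_graph_def by (blast intro: finite_subset[of Ed "Pow N"])

lemma degree_outside:
  assumes "simple_graph N Ed" "a \<notin> N"
  shows "degree Ed a = 0"
proof -
  have "{e \<in> Ed. a \<in> e} = {}"
    using assms unfolding simple_graph_def by blast
  then show ?thesis
    unfolding degree_def by (metis card.empty)
qed

lemma is_walk_nodes:
  assumes "simple_graph N Ed" "is_walk Ed p" "hd p \<in> N"
  shows "set p \<subseteq> N"
proof
  fix x assume "x \<in> set p"
  then obtain i where i: "i < length p" "x = p ! i"
    by (auto simp: in_set_conv_nth)
  show "x \<in> N"
  proof (cases i)
    case 0
    then show ?thesis using i assms(2,3) by (simp add: hd_conv_nth is_walk_def)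
  next
    case (Suc j)
    then have "{p ! j, x} \<in> Ed"
      using i is_walk_nth_edge[OF assms(2), of j] by simp
    then show ?thesis
      using simple_graph_edgeD[OF assms(1)] by blast
  qed
qed

lemma unique_simple_path_sym:
  assumes "\<exists>!p. simple_path Ed a b p"
  shows "\<exists>!p. simple_path Ed b a p"
proof -
  obtain p where p: "simple_path Ed a b p" and uniq: "\<And>q. simple_path Ed a b q \<Longrightarrow> q = p"
    using assms by blast
  show ?thesis
  proof (rule ex1I[of _ "rev p"])
    show "simple_path Ed b a (rev p)"
      using p by (rule simple_path_rev)
    show "q = rev p" if "simple_path Ed b a q" for q
      using uniq[OF simple_path_rev[OF that]] rev_swap by blast
  qed
qed

lemma the_simple_path_sym:
  assumes "\<exists>!p. simple_path Ed a b p"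
  shows "(THE p. simple_path Ed b a p) = rev (THE p. simple_path Ed a b p)"
  by (rule the1_equality[OF unique_simple_path_sym[OF assms] simple_path_rev[OF theI'[OF assms]]])

lemma tree_dist_sym:
  assumes "\<exists>!p. simple_path Ed a b p"
  shows "tree_dist Ed w b a = tree_dist Ed w a b"
  unfolding tree_dist_def the_simple_path_sym[OF assms] path_edges_rev
  by (simp add: rev_map[symmetric])

lemma tree_dist_same [simp]: "tree_dist Ed w a a = 0"
  by (simp add: tree_dist_def simple_path_same)

text \<open>Every tree has unique simple paths, but it is simpler to carry uniqueness along the
  construction than to derive it from acyclicity.\<close>
definition unique_path_tree :: "'n set \<Rightarrow> 'n set set \<Rightarrow> bool" where
  "unique_path_tree N Ed \<longleftrightarrow> is_tree N Ed \<and> (\<forall>a\<in>N. \<forall>b\<in>N. \<exists>!p. simple_path Ed a b p)"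

lemma unique_path_tree_singleton: "unique_path_tree {a} {}"
proof -
  have "\<exists>!p. simple_path {} a a p"
    by (simp add: simple_path_same)
  moreover have "\<nexists>p. is_walk {} p \<and> distinct p \<and> length p \<ge> 3 \<and> {last p, hd p} \<in> {}"
    by simp
  ultimately show ?thesis
    unfolding unique_path_tree_def is_tree_def simple_graph_def
    by (auto simp del: simple_path_same)
qed

locale pendant =
  fixes N :: "'n set" and Ed :: "'n set set" and u v :: 'n
  assumes tree: "unique_path_tree N Ed" and attach: "u \<in> N" and fresh: "v \<notin> N"
begin

abbreviation "N' \<equiv> insert v N"
abbreviation "Ed' \<equiv> insert {v, u} Ed"

lemma simple_graph: "simple_graph N Ed"
  using tree by (simp add: unique_path_tree_def is_tree_def)

lemma acyclic: "\<nexists>p. is_walk Ed p \<and> distinct p \<and> length p \<ge> 3 \<and> {last p, hd p} \<in> Ed"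
  using tree by (simp add: unique_path_tree_def is_tree_def)

lemma unique_path: "a \<in> N \<Longrightarrow> b \<in> N \<Longrightarrow> \<exists>!p. simple_path Ed a b p"
  using tree by (simp add: unique_path_tree_def)

lemma simple_graph': "simple_graph N' Ed'"
  using simple_graph attach fresh unfolding simple_graph_def by blast

lemma neighbour: "{a, v} \<in> Ed' \<Longrightarrow> a = u"
  using simple_graph_edgeD[OF simple_graph', of a v] simple_graph_edgeD[OF simple_graph, of a v] fresh
  by (auto simp: doubleton_eq_iff)

lemma walk_avoiding_pendant: "is_walk Ed' p \<Longrightarrow> v \<notin> set p \<Longrightarrow> is_walk Ed p"
  unfolding is_walk_iff_nth
proof (intro conjI allI impI)
  fix i assume walk: "p \<noteq> [] \<and> (\<forall>i. Suc i < length p \<longrightarrow> {p ! i, p ! Suc i} \<in> Ed')"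
    and v: "v \<notin> set p" and i: "Suc i < length p"
  then have "v \<noteq> p ! i" "v \<noteq> p ! Suc i"
    using nth_mem[of i p] nth_mem[of "Suc i" p] by auto
  then show "{p ! i, p ! Suc i} \<in> Ed"
    using walk i by (auto simp: doubleton_eq_iff)
qed auto

lemma not_interior:
  assumes p: "is_walk Ed' p" "distinct p" and i: "p ! i = v" "0 < i" "Suc i < length p"
  shows False
proof -
  have "{p ! (i - 1), p ! Suc (i - 1)} \<in> Ed'" "{p ! i, p ! Suc i} \<in> Ed'"
    using is_walk_nth_edge[OF p(1), of "i - 1"] is_walk_nth_edge[OF p(1), of i] i(2,3) by simp_all
  then have edges: "{p ! (i - 1), v} \<in> Ed'" "{p ! Suc i, v} \<in> Ed'"
    using i(1,2) by (simp_all add: insert_commute)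
  have "p ! (i - 1) = p ! Suc i"
    using neighbour[OF edges(1)] neighbour[OF edges(2)] by simp
  then show False
    using p(2) i(2,3) nth_eq_iff_index_eq[of p "i - 1" "Suc i"] by linarith
qed

lemma no_cycle_from_pendant:
  assumes p: "is_walk Ed' p" "distinct p" "length p \<ge> 3" "{last p, hd p} \<in> Ed'" and "hd p = v"
  shows False
proof -
  have "p \<noteq> []"
    using p(3) by auto
  then have "p ! 0 = v" "last p = p ! (length p - 1)"
    using \<open>hd p = v\<close> by (simp_all add: hd_conv_nth last_conv_nth)
  then have edges: "{p ! 1, v} \<in> Ed'" "{p ! (length p - 1), v} \<in> Ed'"
    using is_walk_nth_edge[OF p(1), of 0] p(3,4) \<open>hd p = v\<close> by (simp_all add: insert_commute)
  have "p ! 1 = p ! (length p - 1)"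
    using neighbour[OF edges(1)] neighbour[OF edges(2)] by simp
  then show False
    using p(2,3) nth_eq_iff_index_eq[of p 1 "length p - 1"] by linarith
qed

lemma acyclic': "\<nexists>p. is_walk Ed' p \<and> distinct p \<and> length p \<ge> 3 \<and> {last p, hd p} \<in> Ed'"
proof
  assume "\<exists>p. is_walk Ed' p \<and> distinct p \<and> length p \<ge> 3 \<and> {last p, hd p} \<in> Ed'"
  then obtain p where p: "is_walk Ed' p" "distinct p" "length p \<ge> 3" "{last p, hd p} \<in> Ed'"
    by blast
  then have ne: "p \<noteq> []"
    by auto
  show False
  proof (cases "v \<in> set p")
    case False
    then have "{last p, hd p} \<noteq> {v, u}"
      using ne by (metis doubleton_eq_iff hd_in_set last_in_set)
    then show False
      using acyclic p walk_avoiding_pendant[OF p(1) False] by simp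
  next
    case True
    then obtain i where i: "i < length p" "p ! i = v"
      by (auto simp: in_set_conv_nth)
    consider "i = 0" | "i = length p - 1" | "0 < i" "Suc i < length p"
      using i(1) by linarith
    then show False
    proof cases
      case 1
      then show False
        using no_cycle_from_pendant[OF p] i ne by (simp add: hd_conv_nth)
    next
      case 2
      have "{last (rev p), hd (rev p)} \<in> Ed'"
        using p(4) by (simp add: hd_rev last_rev insert_commute)
      then show False
        using no_cycle_from_pendant[of "rev p"] p i 2 ne by (simp add: hd_rev last_conv_nth)
    next
      case 3
      then show False
        using not_interior[OF p(1,2) i(2)] by blast
    qed
  qed
qed

lemma simple_path_old: "a \<in> N \<Longrightarrow> b \<in> N \<Longrightarrow> simple_path Ed' a b q \<longleftrightarrow> simple_path Ed a b q"
proof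
  assume a: "a \<in> N" and b: "b \<in> N" and q: "simple_path Ed' a b q"
  then have ne: "q \<noteq> []"
    by (simp add: simple_path_def is_walk_def)
  have "v \<notin> set q"
  proof
    assume "v \<in> set q"
    then obtain i where i: "i < length q" "q ! i = v"
      by (auto simp: in_set_conv_nth)
    have "q ! 0 \<in> N" "q ! (length q - 1) \<in> N"
      using q a b ne by (auto simp: simple_path_def hd_conv_nth last_conv_nth)
    then have "i \<noteq> 0" "i \<noteq> length q - 1"
      using i(2) fresh by metis+
    then have "0 < i" "Suc i < length q"
      using i(1) by linarith+
    then show False
      using not_interior[of q i] q i(2) by (simp add: simple_path_def)
  qed
  then show "simple_path Ed a b q"
    using q walk_avoiding_pendant by (simp add: simple_path_def)
qed (auto simp: simple_path_def intro: is_walk_mono)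

lemma simple_path_new:
  assumes b: "b \<in> N"
  shows "simple_path Ed' v b q \<longleftrightarrow> q = v # (THE p. simple_path Ed u b p)"
proof -
  define p where "p = (THE p. simple_path Ed u b p)"
  have p: "simple_path Ed u b p"
    unfolding p_def using theI'[OF unique_path[OF attach b]] .
  obtain r where r: "p = u # r"
    using p by (cases p) (auto simp: simple_path_def is_walk_def)
  have "set p \<subseteq> N"
    using is_walk_nodes[OF simple_graph] p attach by (simp add: simple_path_def)
  then have "simple_path Ed' v b (v # p)"
    using p r fresh is_walk_mono[of Ed p Ed'] by (auto simp: simple_path_def)
  moreover have "q = v # p" if q: "simple_path Ed' v b q"
  proof -
    obtain c r' where q': "q = v # c # r'"
      using q b fresh by (cases q rule: remdups_adj.cases) (auto simp: simple_path_def is_walk_def)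
    have "c = u"
      using q q' neighbour by (simp add: simple_path_def insert_commute)
    then have "simple_path Ed u b (c # r')"
      using q q' walk_avoiding_pendant[of "c # r'"] by (auto simp: simple_path_def)
    then show ?thesis
      using p unique_path[OF attach b] q' by blast
  qed
  ultimately show ?thesis
    unfolding p_def[symmetric] by blast
qed

lemma unique_path_tree': "unique_path_tree N' Ed'"
proof -
  have new: "\<exists>!p. simple_path Ed' v c p" if "c \<in> N" for c
    using simple_path_new[OF that] by auto
  have unique: "\<exists>!p. simple_path Ed' a b p" if "a \<in> N'" "b \<in> N'" for a b
  proof (cases "a = v"; cases "b = v")
    assume "a \<noteq> v" "b \<noteq> v"
    then show ?thesis
      using that unique_path simple_path_old by simp
  qed (use that new unique_simple_path_sym[OF new] in \<open>simp_all add: simple_path_same\<close>)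
  then have "\<forall>a\<in>N'. \<forall>b\<in>N'. \<exists>p. simple_path Ed' a b p"
    by (blast intro: ex1_implies_ex)
  then show ?thesis
    unfolding unique_path_tree_def is_tree_def using simple_graph' acyclic' unique by blast
qed

lemma tree_dist_old:
  assumes "a \<in> N" "b \<in> N"
  shows "tree_dist Ed' w a b = tree_dist Ed w a b"
proof -
  have "simple_path Ed' a b = simple_path Ed a b"
    using simple_path_old[OF assms] by blast
  then show ?thesis
    by (simp add: tree_dist_def)
qed

lemma tree_dist_new: "b \<in> N \<Longrightarrow> tree_dist Ed' w v b = w {v, u} + tree_dist Ed w u b"
proof -
  assume b: "b \<in> N"
  define p where "p = (THE p. simple_path Ed u b p)"
  have p: "simple_path Ed u b p"
    unfolding p_def using theI'[OF unique_path[OF attach b]] .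
  then have "p \<noteq> []" "hd p = u"
    by (auto simp: simple_path_def is_walk_def)
  moreover have "(THE q. simple_path Ed' v b q) = v # p"
    using simple_path_new[OF b] unfolding p_def by simp
  ultimately show ?thesis
    unfolding tree_dist_def p_def[symmetric] by (simp add: path_edges_Cons)
qed

lemma degree': "degree Ed' a = degree Ed a + (if a = v \<or> a = u then 1 else 0)"
proof -
  have fin: "finite {e \<in> Ed. a \<in> e}"
    using simple_graph_finite_edges[OF simple_graph] by simp
  have "{v, u} \<notin> Ed"
    using simple_graph_edgeD[OF simple_graph, of v u] fresh by blast
  moreover have "{e \<in> Ed'. a \<in> e} = (if a = v \<or> a = u then insert {v, u} else id) {e \<in> Ed. a \<in> e}"
    by auto
  ultimately show ?thesis
    using fin by (simp add: degree_def)
qed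

end

text \<open>Node \<open>a\<close> hangs at height \<open>h a\<close> above the point \<open>P a\<close> of a line; \<open>hp_dist\<close> is the
  length of the route up and down through the line, and \<open>hp_weight\<close> gives each edge exactly
  this length.\<close>
definition hp_weight :: "('n \<Rightarrow> real) \<Rightarrow> ('n \<Rightarrow> real) \<Rightarrow> 'n set \<Rightarrow> real" where
  "hp_weight P h e = (\<Sum>a\<in>e. h a) + (Max (P ` e) - Min (P ` e))"

definition hp_dist :: "('n \<Rightarrow> real) \<Rightarrow> ('n \<Rightarrow> real) \<Rightarrow> 'n \<Rightarrow> 'n \<Rightarrow> real" where
  "hp_dist P h a b = (if a = b then 0 else h a + h b + \<bar>P a - P b\<bar>)"

lemma hp_weight_doubleton: "a \<noteq> b \<Longrightarrow> hp_weight P h {a, b} = hp_dist P h a b"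
  by (simp add: hp_weight_def hp_dist_def max_def min_def)

lemma hp_dist_sym: "hp_dist P h a b = hp_dist P h b a"
  by (simp add: hp_dist_def abs_minus_commute add.commute)

lemma (in pendant) tree_dist_hp_dist':
  assumes dist: "\<forall>a\<in>N. \<forall>b\<in>N. tree_dist Ed (hp_weight P h) a b = hp_dist P h a b"
    and compatible: "\<forall>b\<in>N. hp_dist P h v u + hp_dist P h u b = hp_dist P h v b"
  shows "\<forall>a\<in>N'. \<forall>b\<in>N'. tree_dist Ed' (hp_weight P h) a b = hp_dist P h a b"
proof -
  have "hp_weight P h {v, u} = hp_dist P h v u"
    using attach fresh by (metis hp_weight_doubleton)
  then have new: "tree_dist Ed' (hp_weight P h) v b = hp_dist P h v b" if "b \<in> N" for b
    using tree_dist_new[OF that] dist compatible attach that by simp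
  have "\<exists>!p. simple_path Ed' v b p" if "b \<in> N" for b
    using simple_path_new[OF that] by auto
  then have "tree_dist Ed' (hp_weight P h) a v = hp_dist P h a v" if "a \<in> N" for a
    using new[OF that] tree_dist_sym hp_dist_sym that by metis
  then show ?thesis
    using new dist tree_dist_old by (auto simp: hp_dist_def)
qed

text \<open>The caterpillar of \<open>[x\<^sub>1, \<dots>, x\<^sub>n]\<close>: the spine
  \<open>Inr (n - 1) \<dots> Inr 1\<close> continues into the leaf \<open>Inl x\<^sub>n\<close>, and \<open>Inl x\<^sub>i\<close> hangs from
  \<open>Inr (n - i)\<close> for \<open>i < n\<close>. Hence \<open>Inr i\<close> sits next to \<open>Inl (rev xs ! i)\<close>.\<close>
fun caterpillar_end :: "'a list \<Rightarrow> 'a + nat" where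
  "caterpillar_end [x] = Inl x"
| "caterpillar_end (x # xs) = Inr (length xs)"

fun caterpillar_nodes :: "'a list \<Rightarrow> ('a + nat) set" where
  "caterpillar_nodes [] = {}"
| "caterpillar_nodes [x] = {Inl x}"
| "caterpillar_nodes (x # xs) = insert (Inl x) (insert (Inr (length xs)) (caterpillar_nodes xs))"

fun caterpillar_edges :: "'a list \<Rightarrow> ('a + nat) set set" where
  "caterpillar_edges [] = {}"
| "caterpillar_edges [x] = {}"
| "caterpillar_edges (x # xs) =
     insert {Inl x, Inr (length xs)} (insert {Inr (length xs), caterpillar_end xs} (caterpillar_edges xs))"

lemma caterpillar_Cons:
  assumes "xs \<noteq> []"
  shows "caterpillar_end (x # xs) = Inr (length xs)"
    and "caterpillar_nodes (x # xs) = insert (Inl x) (insert (Inr (length xs)) (caterpillar_nodes xs))"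
    and "caterpillar_edges (x # xs) =
      insert {Inl x, Inr (length xs)} (insert {Inr (length xs), caterpillar_end xs} (caterpillar_edges xs))"
  using assms by (cases xs; simp)+

lemma caterpillar_nodes_eq:
  "xs \<noteq> [] \<Longrightarrow> caterpillar_nodes xs = Inl ` set xs \<union> Inr ` {1..<length xs}"
proof (induction xs rule: list_nonempty_induct)
  case (cons x xs)
  have "{1..<Suc (length xs)} = insert (length xs) {1..<length xs}"
    using cons.hyps by (auto simp: Suc_le_eq)
  then show ?case
    using cons by (auto simp: caterpillar_Cons)
qed simp

lemma caterpillar_end_cases:
  "xs \<noteq> [] \<Longrightarrow> caterpillar_nodes xs = {caterpillar_end xs} \<and> caterpillar_edges xs = {}
    \<or> caterpillar_end xs = Inr (length xs - 1)"
  by (induction xs rule: induct_list012) auto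

lemma caterpillar_end_mem: "xs \<noteq> [] \<Longrightarrow> caterpillar_end xs \<in> caterpillar_nodes xs"
  by (induction xs rule: induct_list012) auto

lemma caterpillar_pendants:
  assumes "distinct (x # xs)" "xs \<noteq> []"
    and "unique_path_tree (caterpillar_nodes xs) (caterpillar_edges xs)"
  shows "pendant (caterpillar_nodes xs) (caterpillar_edges xs) (caterpillar_end xs) (Inr (length xs))"
    and "pendant (insert (Inr (length xs)) (caterpillar_nodes xs))
      (insert {Inr (length xs), caterpillar_end xs} (caterpillar_edges xs)) (Inr (length xs)) (Inl x)"
proof -
  show first: "pendant (caterpillar_nodes xs) (caterpillar_edges xs) (caterpillar_end xs) (Inr (length xs))"
    using assms caterpillar_end_mem[OF assms(2)] by unfold_locales (auto simp: caterpillar_nodes_eq)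
  show "pendant (insert (Inr (length xs)) (caterpillar_nodes xs))
      (insert {Inr (length xs), caterpillar_end xs} (caterpillar_edges xs)) (Inr (length xs)) (Inl x)"
    using assms pendant.unique_path_tree'[OF first]
    by unfold_locales (auto simp: caterpillar_nodes_eq)
qed

lemma unique_path_tree_caterpillar:
  "xs \<noteq> [] \<Longrightarrow> distinct xs \<Longrightarrow> unique_path_tree (caterpillar_nodes xs) (caterpillar_edges xs)"
proof (induction xs rule: list_nonempty_induct)
  case (single x)
  then show ?case
    by (simp add: unique_path_tree_singleton)
next
  case (cons x xs)
  then have "unique_path_tree (caterpillar_nodes xs) (caterpillar_edges xs)"
    by simp
  from pendant.unique_path_tree'[OF caterpillar_pendants(2)[OF cons.prems cons.hyps(1) this]]
  show ?case
    by (simp only: caterpillar_Cons[OF cons.hyps(1)])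
qed

lemma degree_caterpillar_Cons:
  assumes "distinct (x # xs)" "xs \<noteq> []"
  shows "degree (caterpillar_edges (x # xs)) a = degree (caterpillar_edges xs) a
    + (if a = Inr (length xs) \<or> a = caterpillar_end xs then 1 else 0)
    + (if a = Inl x \<or> a = Inr (length xs) then 1 else 0)"
proof -
  have "distinct xs"
    using assms(1) by simp
  note pendants = caterpillar_pendants[OF assms unique_path_tree_caterpillar[OF assms(2) this]]
  show ?thesis
    using pendant.degree'[OF pendants(1)] pendant.degree'[OF pendants(2)] assms(2)
    by (simp add: caterpillar_Cons)
qed

lemma caterpillar_degree:
  assumes "xs \<noteq> []" "distinct xs"
  shows "(\<forall>x\<in>set xs. degree (caterpillar_edges xs) (Inl x) \<le> 1) \<and>
    (\<forall>i\<in>{1..<length xs}. 2 \<le> degree (caterpillar_edges xs) (Inr i))"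
  using assms
proof (induction xs rule: list_nonempty_induct)
  case (single x)
  then show ?case
    by (simp add: degree_def)
next
  case (cons x xs)
  let ?n = "length xs" and ?e = "caterpillar_end xs"
  note degree = degree_caterpillar_Cons[OF cons.prems cons.hyps]
  have IH: "\<forall>x\<in>set xs. degree (caterpillar_edges xs) (Inl x) \<le> 1"
    "\<forall>i\<in>{1..<?n}. 2 \<le> degree (caterpillar_edges xs) (Inr i)"
    using cons by simp_all
  have fresh: "Inl x \<notin> caterpillar_nodes xs" "Inr ?n \<notin> caterpillar_nodes xs"
    using cons.prems cons.hyps by (auto simp: caterpillar_nodes_eq)
  have "simple_graph (caterpillar_nodes xs) (caterpillar_edges xs)"
    using cons unique_path_tree_caterpillar[of xs] by (simp add: unique_path_tree_def is_tree_def)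
  then have outside: "degree (caterpillar_edges xs) a = 0" if "a \<notin> caterpillar_nodes xs" for a
    using that by (rule degree_outside)
  have end_Inl: "degree (caterpillar_edges xs) ?e = 0" if "?e = Inl y" for y
    using that caterpillar_end_cases[OF cons.hyps] by (auto simp: degree_def)
  have "degree (caterpillar_edges (x # xs)) (Inl z) \<le> 1" if "z \<in> set (x # xs)" for z
  proof (cases "z = x")
    case True
    then show ?thesis
      using degree[of "Inl x"] outside[OF fresh(1)] caterpillar_end_mem[OF cons.hyps] fresh(1) by auto
  next
    case False
    then have "degree (caterpillar_edges xs) (Inl z) \<le> 1"
      using that IH(1) by simp
    then show ?thesis
      using degree[of "Inl z"] end_Inl[of z] False by (cases "?e = Inl z") simp_all
  qed
  moreover have "2 \<le> degree (caterpillar_edges (x # xs)) (Inr i)" if "i \<in> {1..<length (x # xs)}" for i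
  proof (cases "i = ?n")
    case True
    then show ?thesis
      using degree[of "Inr ?n"] outside[OF fresh(2)] by simp
  next
    case False
    then have "2 \<le> degree (caterpillar_edges xs) (Inr i)"
      using that IH(2) by simp
    then show ?thesis
      using degree[of "Inr i"] by simp
  qed
  ultimately show ?case
    by blast
qed

lemma leaves_caterpillar:
  assumes "xs \<noteq> []" "distinct xs"
  shows "leaves (caterpillar_nodes xs) (caterpillar_edges xs) = Inl ` set xs"
  using caterpillar_degree[OF assms] unfolding leaves_def caterpillar_nodes_eq[OF assms(1)]
  by fastforce

lemma caterpillar_end_least:
  assumes "xs \<noteq> []" "sorted (map (\<lambda>x. P (Inl x)) xs)"
    and "\<forall>i<length xs. P (Inr i) = P (Inl (rev xs ! i))"
    and "b \<in> caterpillar_nodes xs"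
  shows "P (caterpillar_end xs) \<le> P b"
  using caterpillar_end_cases[OF assms(1)]
proof
  assume "caterpillar_end xs = Inr (length xs - 1)"
  moreover have "rev xs ! (length xs - 1) = hd xs"
    using assms(1) by (metis last_conv_nth last_rev length_rev rev_is_Nil_conv)
  ultimately have "P (caterpillar_end xs) = P (Inl (hd xs))"
    using assms(1,3) by simp
  moreover have hd_least: "P (Inl (hd xs)) \<le> P (Inl y)" if "y \<in> set xs" for y
    using assms(1,2) that by (cases xs) auto
  moreover have "rev xs ! i \<in> set xs" if "i < length xs" for i
    using that nth_mem[of i "rev xs"] by simp
  ultimately show ?thesis
    using assms(3,4) by (auto simp: caterpillar_nodes_eq[OF assms(1)])
qed (use assms(4) in simp)

lemma hp_dist_caterpillar_spine:
  assumes "xs \<noteq> []" "sorted (map (\<lambda>x. P (Inl x)) (x # xs))"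
    and "\<forall>i<length (x # xs). P (Inr i) = P (Inl (rev (x # xs) ! i))" and "\<forall>i. h (Inr i) = 0"
    and "b \<in> caterpillar_nodes xs"
  shows "hp_dist P h (Inr (length xs)) (caterpillar_end xs) + hp_dist P h (caterpillar_end xs) b
    = hp_dist P h (Inr (length xs)) b"
proof (cases "b = caterpillar_end xs")
  case False
  then have "caterpillar_end xs = Inr (length xs - 1)"
    using caterpillar_end_cases[OF assms(1)] assms(5) by auto
  moreover have "Inr (length xs) \<notin> caterpillar_nodes xs"
    using assms(1) by (auto simp: caterpillar_nodes_eq)
  moreover have "P (Inr (length xs)) \<le> P (caterpillar_end xs)"
    using caterpillar_end_least[OF _ assms(2,3), of "caterpillar_end xs"] assms(1)
    by (simp add: caterpillar_Cons caterpillar_end_mem)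
  moreover have "P (caterpillar_end xs) \<le> P b"
    using assms(1-3,5) by (intro caterpillar_end_least) (simp_all add: nth_append)
  ultimately show ?thesis
    using False assms(4,5) by (auto simp: hp_dist_def)
qed (simp add: hp_dist_def)

lemma tree_dist_caterpillar:
  assumes "xs \<noteq> []" "distinct xs" "sorted (map (\<lambda>x. P (Inl x)) xs)"
    and "\<forall>i<length xs. P (Inr i) = P (Inl (rev xs ! i))" and spine: "\<forall>i. h (Inr i) = 0"
  shows "\<forall>a\<in>caterpillar_nodes xs. \<forall>b\<in>caterpillar_nodes xs.
    tree_dist (caterpillar_edges xs) (hp_weight P h) a b = hp_dist P h a b"
  using assms(1-4)
proof (induction xs rule: list_nonempty_induct)
  case (single x)
  then show ?case
    by (simp add: hp_dist_def)
next
  case (cons x xs)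
  let ?n = "length xs" and ?e = "caterpillar_end xs"
  have hyps: "distinct xs" "sorted (map (\<lambda>x. P (Inl x)) xs)"
    "\<forall>i<length xs. P (Inr i) = P (Inl (rev xs ! i))"
    using cons.prems by (simp_all add: nth_append)
  note pendants = caterpillar_pendants[OF cons.prems(1) cons.hyps
    unique_path_tree_caterpillar[OF cons.hyps hyps(1)]]
  have fresh: "Inl x \<notin> caterpillar_nodes xs" "Inr ?n \<notin> caterpillar_nodes xs"
    using cons.prems(1) cons.hyps by (auto simp: caterpillar_nodes_eq)
  have P_new: "P (Inr ?n) = P (Inl x)"
    using cons.prems(3) by (simp add: nth_append)
  have compatible_spine:
    "\<forall>b\<in>caterpillar_nodes xs. hp_dist P h (Inr ?n) ?e + hp_dist P h ?e b = hp_dist P h (Inr ?n) b"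
    using hp_dist_caterpillar_spine[OF cons.hyps cons.prems(2,3) spine] by blast
  have compatible_leaf: "\<forall>b\<in>insert (Inr ?n) (caterpillar_nodes xs).
      hp_dist P h (Inl x) (Inr ?n) + hp_dist P h (Inr ?n) b = hp_dist P h (Inl x) b"
    using fresh P_new spine by (auto simp: hp_dist_def)
  from pendant.tree_dist_hp_dist'[OF pendants(2)
      pendant.tree_dist_hp_dist'[OF pendants(1) cons.IH[OF hyps] compatible_spine] compatible_leaf]
  show ?case
    by (simp only: caterpillar_Cons[OF cons.hyps])
qed

lemma pcg_caterpillar:
  assumes "simple_graph V E" "V \<noteq> {}" "set xs = V" "distinct xs"
    and "sorted (map (\<lambda>x. P (Inl x)) xs)" "\<forall>i<length xs. P (Inr i) = P (Inl (rev xs ! i))"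
    and spine: "\<forall>i. h (Inr i) = 0" and leaf: "\<forall>x\<in>V. 0 \<le> h (Inl x)"
    and "0 \<le> dmin" "dmin \<le> dmax"
    and adjacency: "\<forall>u\<in>V. \<forall>v\<in>V. u \<noteq> v \<longrightarrow>
      ({u, v} \<in> E \<longleftrightarrow> dmin \<le> hp_dist P h (Inl u) (Inl v) \<and> hp_dist P h (Inl u) (Inl v) \<le> dmax)"
  shows "pcg V E"
proof -
  let ?N = "caterpillar_nodes xs" and ?Ed = "caterpillar_edges xs"
  have xs: "xs \<noteq> []"
    using assms(2,3) by auto
  have tree: "is_tree ?N ?Ed"
    using unique_path_tree_caterpillar[OF xs assms(4)] by (simp add: unique_path_tree_def)
  have "0 \<le> h a" if "a \<in> ?N" for a
    using that spine leaf assms(3) by (auto simp: caterpillar_nodes_eq[OF xs])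
  then have "0 \<le> hp_weight P h e" if "e \<in> ?Ed" for e
    using that tree unfolding is_tree_def simple_graph_def
    by (force simp: hp_weight_doubleton hp_dist_def)
  moreover have "tree_dist ?Ed (hp_weight P h) (Inl u) (Inl v) = hp_dist P h (Inl u) (Inl v)"
    if "u \<in> V" "v \<in> V" for u v
    using tree_dist_caterpillar[OF xs assms(4-7)] that assms(3) by (simp add: caterpillar_nodes_eq[OF xs])
  ultimately show ?thesis
    unfolding pcg_def using assms(1,3,4,9,10) adjacency tree leaves_caterpillar[OF xs assms(4)]
    by (intro conjI exI[of _ ?N] exI[of _ ?Ed] exI[of _ "hp_weight P h"] exI[of _ dmin] exI[of _ dmax]) auto
qed

lemma hp_dist_tolerance_leaves:
  assumes "u \<noteq> v"
  shows "hp_dist (case_sum (\<lambda>x. - t x / 2) p) (case_sum (\<lambda>x. C / 2 + g x - t x / 2) q) (Inl u) (Inl v)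
    = C + g u + g v - min (t u) (t v)"
  using assms by (simp add: hp_dist_def min_def abs_if)

theorem theorem3:
  fixes V :: "'a set" and E :: "'a set set"
  assumes "V \<noteq> {}"
    and "threshold_tolerance_graph V E"
  shows "pcg V E"
proof -
  obtain g t :: "'a \<Rightarrow> real" where pos: "\<forall>x\<in>V. g x > 0 \<and> t x > 0"
    and adj: "\<forall>x\<in>V. \<forall>y\<in>V. x \<noteq> y \<longrightarrow> ({x, y} \<in> E \<longleftrightarrow> g x + g y \<ge> min (t x) (t y))"
    using assms(2) unfolding threshold_tolerance_graph_def by blast
  have graph: "simple_graph V E" and "finite V"
    using assms(2) by (simp_all add: threshold_tolerance_graph_def simple_graph_def)
  define C where "C = (\<Sum>x\<in>V. t x)"
  define G where "G = (\<Sum>x\<in>V. g x)"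
  obtain xs where xs: "set xs = V" "distinct xs" "sorted (map (\<lambda>x. - t x / 2) xs)"
    using finite_distinct_list[OF \<open>finite V\<close>] by (metis distinct_sort set_sort sorted_sort_key)
  define P :: "'a + nat \<Rightarrow> real" where "P = case_sum (\<lambda>x. - t x / 2) (\<lambda>i. - t (rev xs ! i) / 2)"
  define h :: "'a + nat \<Rightarrow> real" where "h = case_sum (\<lambda>x. C / 2 + g x - t x / 2) (\<lambda>i. 0)"
  have "t x \<le> C" if "x \<in> V" for x
    unfolding C_def using that pos \<open>finite V\<close> by (intro member_le_sum) (auto intro: less_imp_le)
  then have "0 \<le> h (Inl x)" if "x \<in> V" for x
    using that pos by (fastforce simp: h_def)
  moreover have "{u, v} \<in> E \<longleftrightarrow> C \<le> hp_dist P h (Inl u) (Inl v) \<and> hp_dist P h (Inl u) (Inl v) \<le> C + G"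
    if "u \<in> V" "v \<in> V" "u \<noteq> v" for u v
  proof -
    have "g u + g v \<le> G" "0 < min (t u) (t v)"
      using that pos \<open>finite V\<close> sum_mono2[of V "{u, v}" g] by (force simp: G_def)+
    then show ?thesis
      using that adj unfolding P_def h_def hp_dist_tolerance_leaves[OF \<open>u \<noteq> v\<close>] by auto
  qed
  moreover have "0 \<le> C" "0 \<le> G"
    using pos by (auto simp: C_def G_def intro: sum_nonneg less_imp_le)
  ultimately show ?thesis
    using graph assms(1) xs
    by (intro pcg_caterpillar[where xs = xs and P = P and h = h and dmin = C and dmax = "C + G"])
      (simp_all add: P_def h_def)
qed

end
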